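(* Let $M$ be a finite monoid with identity $1$. (i) If $M$ is a group, then $\sigma_m(M)=\sigma_m^*(M)=\sigma_s(M)=\sigma_g(M)$. (ii) If $S=M-\{1\}$ is a subsemigroup of $M$ which is a group, then $\sigma_m^*(M)=\sigma_s(M)=2$ and $\sigma_m(M)=\sigma_g(S)$. (iii) If $S=M-\{1\}$ is a subsemigroup of $M$ which is monogenic but not a group, then $\sigma_s(M)=2$ and $\sigma_m^*(M)=\sigma_m(M)=\infty$. (iv) Otherwise, $\sigma_m(M)=\sigma_m^*(M)=\sigma_s(M)=2$.
   Context: A subsemigroup is a nonempty subset closed under the operation; monogenic means generated as a semigroup by a single element. For a monoid $M$: a submonoid is a subsemigroup containing the identity of $M$; a monoidal subsemigroup is a subsemigroup that is a monoid in its own right (identity possibly different from that of $M$). $\sigma_s$, $\sigma_m$, $\sigma_m^*$, $\sigma_g$ denote the least positive integer $n$ such that the structure is the union of $n$ proper subsemigroups, proper submonoids, proper monoidal subsemigroups, respectively proper subgroups (for a group), or $\infty$ if no such finite $n$ exists. *)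

theory Defs
  imports "HOL-Algebra.Group" "HOL-Library.Extended_Nat"
begin

definition subsemigroup :: "('a, 'b) monoid_scheme \<Rightarrow> 'a set \<Rightarrow> bool" where
  "subsemigroup M T \<longleftrightarrow> T \<subseteq> carrier M \<and> T \<noteq> {} \<and>
     (\<forall>x\<in>T. \<forall>y\<in>T. x \<otimes>\<^bsub>M\<^esub> y \<in> T)"

definition submonoid' :: "('a, 'b) monoid_scheme \<Rightarrow> 'a set \<Rightarrow> bool" where
  "submonoid' M T \<longleftrightarrow> subsemigroup M T \<and> \<one>\<^bsub>M\<^esub> \<in> T"

definition monoidal_subsemigroup :: "('a, 'b) monoid_scheme \<Rightarrow> 'a set \<Rightarrow> bool" where
  "monoidal_subsemigroup M T \<longleftrightarrow> subsemigroup M T \<and>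
     (\<exists>e\<in>T. \<forall>x\<in>T. e \<otimes>\<^bsub>M\<^esub> x = x \<and> x \<otimes>\<^bsub>M\<^esub> e = x)"

definition monogenic :: "('a, 'b) monoid_scheme \<Rightarrow> 'a set \<Rightarrow> bool" where
  "monogenic M T \<longleftrightarrow> (\<exists>a\<in>T. T = {a [^]\<^bsub>M\<^esub> (n::nat) | n. n \<ge> 1})"

text \<open>Least n such that X is the union of n proper subsets satisfying P; \<infinity> if none.\<close>
definition cover_num :: "'a set \<Rightarrow> ('a set \<Rightarrow> bool) \<Rightarrow> enat" where
  "cover_num X P = Inf {enat n | n. \<exists>F. finite F \<and> card F = n \<and>
      (\<forall>A\<in>F. P A \<and> A \<noteq> X) \<and> \<Union>F = X}"

definition sigma_s :: "('a, 'b) monoid_scheme \<Rightarrow> enat" where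
  "sigma_s M = cover_num (carrier M) (subsemigroup M)"

definition sigma_m :: "('a, 'b) monoid_scheme \<Rightarrow> enat" where
  "sigma_m M = cover_num (carrier M) (submonoid' M)"

definition sigma_m_star :: "('a, 'b) monoid_scheme \<Rightarrow> enat" where
  "sigma_m_star M = cover_num (carrier M) (monoidal_subsemigroup M)"

definition sigma_g :: "('a, 'b) monoid_scheme \<Rightarrow> enat" where
  "sigma_g G = cover_num (carrier G) (\<lambda>H. subgroup H G)"

end

theory Submission
  imports Defs "HOL-Algebra.Multiplicative_Group"
begin

text \<open>
  Write \<open>S\<close> for the non-identity elements of the finite monoid \<open>M\<close>. In a finite group every
  nonempty multiplicatively closed subset is a subgroup (the inverse of \<open>a\<close> is a positive power
  of \<open>a\<close>), so all four kinds of covers coincide, giving (i). Whenever \<open>S\<close> is a subsemigroup,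
  \<open>{1}\<close> and \<open>S\<close> cover \<open>M\<close>. If \<open>S\<close> is a group, the proper submonoids of \<open>M\<close> are \<open>{1}\<close> and the
  sets \<open>{1} \<union> K\<close> with \<open>K\<close> a proper subgroup of \<open>S\<close>, giving (ii). If \<open>S\<close> is monogenic, a
  monoidal subsemigroup containing a generator contains \<open>S\<close>, so it is \<open>M\<close> or it makes \<open>S\<close> a
  group, giving (iii).

  For (iv): if \<open>S\<close> is not closed, then \<open>x y = 1\<close> for some \<open>x, y \<in> S\<close>; in a finite monoid this
  makes \<open>x\<close> a unit, and \<open>M\<close> is covered by its units and \<open>{1}\<close> together with its non-units.
  Otherwise the heart of the matter is that a finite semigroup which is neither monogenic nor a
  group is a union of two proper subsemigroups: if some element \<open>a\<close> is not a product, take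
  \<open>S - {a}\<close> and the powers of \<open>a\<close>; otherwise take a proper right ideal \<open>R\<close> of maximal size.
  Either another proper right ideal completes \<open>R\<close> to a cover, or \<open>R\<close> contains every proper
  right ideal, and then \<open>yS = S\<close> for \<open>y \<notin> R\<close>, which makes \<open>S - R\<close> closed. Dually for left
  ideals; a semigroup without proper one-sided ideals is a group. Adjoining \<open>1\<close> to the two
  pieces gives two proper submonoids.
\<close>

section \<open>Covering numbers\<close>

lemma cover_num_eq_2I:
  assumes "P A" "P B" "A \<noteq> X" "B \<noteq> X" "A \<union> B = X"
  shows "cover_num X P = 2"
proof -
  let ?N = "{enat n | n. \<exists>F. finite F \<and> card F = n \<and> (\<forall>A\<in>F. P A \<and> A \<noteq> X) \<and> \<Union>F = X}"
  have "A \<noteq> B" using assms(3-5) by auto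
  then have "card {A, B} = 2" by simp
  have "enat 2 \<in> ?N"
    using assms \<open>card {A, B} = 2\<close> by (intro CollectI exI[of _ 2] conjI exI[of _ "{A, B}"]) auto
  moreover have "enat 2 \<le> m" if "m \<in> ?N" for m
  proof -
    from that obtain F where F: "finite F" "m = enat (card F)" "\<forall>A\<in>F. P A \<and> A \<noteq> X" "\<Union>F = X"
      by blast
    have "card F \<noteq> 0" using F(1,4) assms(3,5) by auto
    moreover have "card F \<noteq> 1" using F(3,4) by (auto simp: card_1_singleton_iff)
    ultimately show ?thesis using F(2) by simp
  qed
  ultimately have "Inf ?N = enat 2" by (meson Inf_greatest Inf_lower antisym)
  then show ?thesis by (simp add: cover_num_def numeral_eq_enat)
qed

lemma cover_num_eq_infinityI:
  assumes "a \<in> X" and "\<And>A. P A \<Longrightarrow> A \<noteq> X \<Longrightarrow> a \<notin> A"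
  shows "cover_num X P = \<infinity>"
proof -
  have "{enat n | n. \<exists>F. finite F \<and> card F = n \<and> (\<forall>A\<in>F. P A \<and> A \<noteq> X) \<and> \<Union>F = X} = {}"
  proof (intro equals0I)
    fix m assume "m \<in> {enat n | n. \<exists>F. finite F \<and> card F = n \<and> (\<forall>A\<in>F. P A \<and> A \<noteq> X) \<and> \<Union>F = X}"
    then obtain F where "\<forall>A\<in>F. P A \<and> A \<noteq> X" "\<Union>F = X" by blast
    with assms show False by blast
  qed
  then show ?thesis unfolding cover_num_def by (simp only: Inf_empty top_enat_def)
qed

lemma cover_num_le:
  assumes "\<And>F. finite F \<Longrightarrow> \<forall>A\<in>F. P A \<and> A \<noteq> X \<Longrightarrow> \<Union>F = X \<Longrightarrow>
     \<exists>G. finite G \<and> card G \<le> card F \<and> (\<forall>B\<in>G. Q B \<and> B \<noteq> Y) \<and> \<Union>G = Y"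
  shows "cover_num Y Q \<le> cover_num X P"
  unfolding cover_num_def
proof (rule Inf_mono)
  fix m assume "m \<in> {enat n | n. \<exists>F. finite F \<and> card F = n \<and> (\<forall>A\<in>F. P A \<and> A \<noteq> X) \<and> \<Union>F = X}"
  then obtain F where "finite F" "m = enat (card F)" "\<forall>A\<in>F. P A \<and> A \<noteq> X" "\<Union>F = X"
    by blast
  with assms obtain G where "finite G" "card G \<le> card F" "\<forall>B\<in>G. Q B \<and> B \<noteq> Y" "\<Union>G = Y"
    by blast
  then have "enat (card G) \<in> {enat n | n. \<exists>G. finite G \<and> card G = n \<and> (\<forall>B\<in>G. Q B \<and> B \<noteq> Y) \<and> \<Union>G = Y}"
    by blast
  moreover have "enat (card G) \<le> m" using \<open>m = enat (card F)\<close> \<open>card G \<le> card F\<close> by simp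
  ultimately show "\<exists>k\<in>{enat n | n. \<exists>G. finite G \<and> card G = n \<and> (\<forall>B\<in>G. Q B \<and> B \<noteq> Y) \<and> \<Union>G = Y}. k \<le> m"
    by blast
qed

section \<open>Finite semigroups covered by two proper subsemigroups\<close>

definition mult_closed :: "('a \<Rightarrow> 'a \<Rightarrow> 'a) \<Rightarrow> 'a set \<Rightarrow> bool" where
  "mult_closed f T \<longleftrightarrow> (\<forall>x\<in>T. \<forall>y\<in>T. f x y \<in> T)"

definition two_proper_closed_cover :: "('a \<Rightarrow> 'a \<Rightarrow> 'a) \<Rightarrow> 'a set \<Rightarrow> bool" where
  "two_proper_closed_cover f S \<longleftrightarrow>
     (\<exists>A B. A \<subset> S \<and> B \<subset> S \<and> A \<union> B = S \<and> mult_closed f A \<and> mult_closed f B)"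

text \<open>The flip rules are only ever used instantiated: as unrestricted rewrite rules they loop,
  since every operation unifies with \<open>\<lambda>x y. ?f y x\<close>.\<close>

lemma mult_closed_flip: "mult_closed (\<lambda>x y. f y x) T = mult_closed f T"
  unfolding mult_closed_def by blast

lemma two_proper_closed_cover_flip:
  "two_proper_closed_cover (\<lambda>x y. f y x) S = two_proper_closed_cover f S"
  unfolding two_proper_closed_cover_def mult_closed_flip[of f] ..

locale finite_semigroup_on =
  fixes S :: "'a set" and f :: "'a \<Rightarrow> 'a \<Rightarrow> 'a"
  assumes finite_carrier: "finite S"
    and closed: "mult_closed f S"
    and assoc: "x \<in> S \<Longrightarrow> y \<in> S \<Longrightarrow> z \<in> S \<Longrightarrow> f (f x y) z = f x (f y z)"
begin

lemma closedD: "x \<in> S \<Longrightarrow> y \<in> S \<Longrightarrow> f x y \<in> S"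
  using closed unfolding mult_closed_def by blast

lemma dual: "finite_semigroup_on S (\<lambda>x y. f y x)"
proof
  show "finite S" by (fact finite_carrier)
  show "mult_closed (\<lambda>x y. f y x) S" using closed unfolding mult_closed_flip[of f] .
  show "f z (f y x) = f (f z y) x" if "x \<in> S" "y \<in> S" "z \<in> S" for x y z
    using assoc that by simp
qed

definition right_ideal :: "'a set \<Rightarrow> bool" where
  "right_ideal R \<longleftrightarrow> R \<subseteq> S \<and> (\<forall>r\<in>R. \<forall>s\<in>S. f r s \<in> R)"

definition is_group :: bool where
  "is_group \<longleftrightarrow> (\<exists>e\<in>S. (\<forall>x\<in>S. f e x = x \<and> f x e = x) \<and> (\<forall>x\<in>S. \<exists>y\<in>S. f y x = e))"

lemma mult_closed_right_ideal: "right_ideal R \<Longrightarrow> mult_closed f R"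
  unfolding right_ideal_def mult_closed_def by blast

lemma right_ideal_Un: "right_ideal A \<Longrightarrow> right_ideal B \<Longrightarrow> right_ideal (A \<union> B)"
  unfolding right_ideal_def by blast

lemma right_ideal_mult_image: "y \<in> S \<Longrightarrow> right_ideal (f y ` S)"
  unfolding right_ideal_def using closedD assoc by auto

lemma mult_image_eq_outside_greatest_right_ideal:
  assumes square: "\<forall>y\<in>S. \<exists>u\<in>S. \<exists>v\<in>S. y = f u v"
    and R: "right_ideal R"
    and greatest: "\<And>T. right_ideal T \<Longrightarrow> T \<noteq> {} \<Longrightarrow> T \<noteq> S \<Longrightarrow> T \<subseteq> R"
    and y: "y \<in> S" "y \<notin> R"
  shows "f y ` S = S"
proof (rule ccontr)
  assume proper: "f y ` S \<noteq> S"
  have yS_R: "f y ` S \<subseteq> R"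
    using greatest[OF right_ideal_mult_image[OF y(1)] _ proper] y(1) by blast
  have "right_ideal (insert y (f y ` S))"
    using right_ideal_mult_image[OF y(1)] y(1) unfolding right_ideal_def by blast
  then have cover: "insert y (f y ` S) = S"
    using greatest y(2) by blast
  obtain u v where uv: "u \<in> S" "v \<in> S" "y = f u v" using square y(1) by blast
  have "u \<notin> R" using uv R y(2) unfolding right_ideal_def by blast
  then have "u = y" using uv(1) cover yS_R by blast
  then show False using uv yS_R y(2) by blast
qed

lemma mult_closed_outside_greatest_right_ideal:
  assumes square: "\<forall>y\<in>S. \<exists>u\<in>S. \<exists>v\<in>S. y = f u v"
    and R: "right_ideal R"
    and greatest: "\<And>T. right_ideal T \<Longrightarrow> T \<noteq> {} \<Longrightarrow> T \<noteq> S \<Longrightarrow> T \<subseteq> R"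
  shows "mult_closed f (S - R)"
  unfolding mult_closed_def
proof (intro ballI DiffI)
  fix y z assume y: "y \<in> S - R" and z: "z \<in> S - R"
  then show "f y z \<in> S" using closedD by blast
  show "f y z \<notin> R"
  proof
    assume yz: "f y z \<in> R"
    have "S = f y ` f z ` S"
      using mult_image_eq_outside_greatest_right_ideal[OF square R greatest] y z by simp
    also have "\<dots> = f (f y z) ` S"
      unfolding image_image using y z by (intro image_cong) (auto simp: assoc)
    also have "\<dots> \<subseteq> R"
      using yz R unfolding right_ideal_def by blast
    finally show False using y by blast
  qed
qed

lemma two_proper_closed_cover_if_greatest_right_ideal:
  assumes square: "\<forall>y\<in>S. \<exists>u\<in>S. \<exists>v\<in>S. y = f u v"
    and R: "right_ideal R" "R \<noteq> {}" "R \<noteq> S"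
    and greatest: "\<And>T. right_ideal T \<Longrightarrow> T \<noteq> {} \<Longrightarrow> T \<noteq> S \<Longrightarrow> T \<subseteq> R"
  shows "two_proper_closed_cover f S"
proof -
  have "R \<subset> S" "S - R \<subset> S" "R \<union> (S - R) = S"
    using R unfolding right_ideal_def by blast+
  moreover have "mult_closed f R" "mult_closed f (S - R)"
    using mult_closed_right_ideal[OF R(1)] mult_closed_outside_greatest_right_ideal[OF square R(1) greatest]
    by blast+
  ultimately show ?thesis unfolding two_proper_closed_cover_def by blast
qed

lemma two_proper_closed_cover_if_right_ideal:
  assumes square: "\<forall>y\<in>S. \<exists>u\<in>S. \<exists>v\<in>S. y = f u v"
    and R: "right_ideal R" "R \<noteq> {}" "R \<noteq> S"
  shows "two_proper_closed_cover f S"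
proof -
  define RI where "RI = {T. right_ideal T \<and> T \<noteq> {} \<and> T \<noteq> S}"
  have "finite RI"
  proof (rule finite_subset)
    show "RI \<subseteq> Pow S" unfolding RI_def right_ideal_def by blast
  qed (simp add: finite_carrier)
  moreover have "RI \<noteq> {}" using R unfolding RI_def by blast
  ultimately obtain R1 where R1: "R1 \<in> RI" and "Max (card ` RI) = card R1"
    by (rule obtains_MAX[where f = card])
  then have R1_max: "card T \<le> card R1" if "T \<in> RI" for T
    using \<open>finite RI\<close> that by (metis Max_ge finite_imageI imageI)
  show ?thesis
  proof (cases "\<exists>R2\<in>RI. R1 \<union> R2 = S")
    case True
    then obtain R2 where R2: "R2 \<in> RI" "R1 \<union> R2 = S" by blast
    have proper_closed: "T \<subset> S \<and> mult_closed f T" if "T \<in> RI" for T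
      using that mult_closed_right_ideal[of T] unfolding RI_def right_ideal_def by blast
    show ?thesis
      using proper_closed[OF R1] proper_closed[OF R2(1)] R2(2)
      unfolding two_proper_closed_cover_def by blast
  next
    case False
    have "T \<subseteq> R1" if "right_ideal T" "T \<noteq> {}" "T \<noteq> S" for T
    proof -
      have "T \<in> RI" using that unfolding RI_def by blast
      then have "R1 \<union> T \<noteq> S" using False by blast
      moreover have "right_ideal (R1 \<union> T)"
        using right_ideal_Un[OF _ that(1)] R1 unfolding RI_def by blast
      ultimately have "R1 \<union> T \<in> RI" using \<open>T \<in> RI\<close> unfolding RI_def by blast
      then have "card (R1 \<union> T) \<le> card R1" by (rule R1_max)
      moreover have "finite (R1 \<union> T)"
        using \<open>right_ideal (R1 \<union> T)\<close> finite_carrier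
        unfolding right_ideal_def by (metis finite_subset)
      ultimately have "R1 = R1 \<union> T" by (metis card_seteq Un_upper1)
      then show ?thesis by blast
    qed
    then show ?thesis
      using two_proper_closed_cover_if_greatest_right_ideal[OF square] R1 unfolding RI_def by blast
  qed
qed

lemma is_group_if_mult_images_eq:
  assumes "S \<noteq> {}"
    and right: "\<And>y. y \<in> S \<Longrightarrow> f y ` S = S"
    and left: "\<And>y. y \<in> S \<Longrightarrow> (\<lambda>x. f x y) ` S = S"
  shows is_group
proof -
  have right_mem: "x \<in> f y ` S" and left_mem: "x \<in> (\<lambda>z. f z y) ` S" if "x \<in> S" "y \<in> S" for x y
    using right[OF that(2)] left[OF that(2)] that(1) by simp_all
  obtain a where a: "a \<in> S" using assms(1) by blast
  obtain e where e: "e \<in> S" "f e a = a" using left_mem[OF a a] by force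
  obtain e' where e': "e' \<in> S" "f a e' = a" using right_mem[OF a a] by force
  have left_one: "f e x = x" if x: "x \<in> S" for x
  proof -
    obtain t where "t \<in> S" "x = f a t" using right_mem[OF x a] by blast
    then show ?thesis using assoc[symmetric] e a by simp
  qed
  have right_one: "f x e' = x" if x: "x \<in> S" for x
  proof -
    obtain t where "t \<in> S" "x = f t a" using left_mem[OF x a] by blast
    then show ?thesis using assoc e' a by simp
  qed
  have "e = e'" using left_one[OF e'(1)] right_one[OF e(1)] by simp
  moreover have "\<exists>y\<in>S. f y x = e" if "x \<in> S" for x
    using left_mem[OF e(1) that] by blast
  ultimately show ?thesis
    unfolding is_group_def using e(1) left_one right_one by blast
qed

lemma mult_image_eq_if_no_proper_right_ideal:
  assumes "\<nexists>R. right_ideal R \<and> R \<noteq> {} \<and> R \<noteq> S" and y: "y \<in> S"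
  shows "f y ` S = S"
proof -
  have "f y ` S \<noteq> {}" using y by blast
  then show ?thesis using assms(1) right_ideal_mult_image[OF y] by blast
qed

theorem two_proper_closed_cover_if_not_group:
  assumes non_monogenic: "\<And>a. a \<in> S \<Longrightarrow> \<exists>T. T \<subset> S \<and> a \<in> T \<and> mult_closed f T"
    and "\<not> is_group" and "S \<noteq> {}"
  shows "two_proper_closed_cover f S"
proof (cases "\<exists>a\<in>S. \<forall>u\<in>S. \<forall>v\<in>S. f u v \<noteq> a")
  case True
  then obtain a where a: "a \<in> S" "\<forall>u\<in>S. \<forall>v\<in>S. f u v \<noteq> a" by blast
  obtain T where T: "T \<subset> S" "a \<in> T" "mult_closed f T" using non_monogenic a(1) by blast
  have "mult_closed f (S - {a})" using a closedD unfolding mult_closed_def by blast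
  moreover have "S - {a} \<subset> S" "(S - {a}) \<union> T = S" using a T by blast+
  ultimately show ?thesis using T unfolding two_proper_closed_cover_def by blast
next
  case False
  then have square: "\<forall>y\<in>S. \<exists>u\<in>S. \<exists>v\<in>S. y = f u v" by (metis (no_types))
  then have dual_square: "\<forall>y\<in>S. \<exists>u\<in>S. \<exists>v\<in>S. y = f v u" by (metis (no_types))
  interpret dual: finite_semigroup_on S "\<lambda>x y. f y x" by (rule dual)
  show ?thesis
  proof (cases "\<exists>R. right_ideal R \<and> R \<noteq> {} \<and> R \<noteq> S")
    case True
    then show ?thesis using two_proper_closed_cover_if_right_ideal[OF square] by blast
  next
    case no_right: False
    show ?thesis
    proof (cases "\<exists>L. dual.right_ideal L \<and> L \<noteq> {} \<and> L \<noteq> S")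
      case True
      then have "two_proper_closed_cover (\<lambda>x y. f y x) S"
        using dual.two_proper_closed_cover_if_right_ideal[OF dual_square] by blast
      then show ?thesis unfolding two_proper_closed_cover_flip[of f] .
    next
      case no_left: False
      have is_group
      proof (rule is_group_if_mult_images_eq[OF \<open>S \<noteq> {}\<close>])
        show "f y ` S = S" if "y \<in> S" for y
          using mult_image_eq_if_no_proper_right_ideal[OF no_right that] .
        show "(\<lambda>x. f x y) ` S = S" if "y \<in> S" for y
          using dual.mult_image_eq_if_no_proper_right_ideal[OF no_left that] .
      qed
      with \<open>\<not> is_group\<close> show ?thesis by contradiction
    qed
  qed
qed

end

section \<open>Finite monoids\<close>

lemma subsemigroup_iff_mult_closed:
  "subsemigroup M T \<longleftrightarrow> T \<subseteq> carrier M \<and> T \<noteq> {} \<and> mult_closed (\<otimes>\<^bsub>M\<^esub>) T"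
  unfolding subsemigroup_def mult_closed_def ..

lemma monoidal_subsemigroup_imp_subsemigroup:
  "monoidal_subsemigroup M T \<Longrightarrow> subsemigroup M T"
  unfolding monoidal_subsemigroup_def by blast

context monoid
begin

lemma submonoid'_imp_monoidal_subsemigroup: "submonoid' G T \<Longrightarrow> monoidal_subsemigroup G T"
  unfolding submonoid'_def monoidal_subsemigroup_def subsemigroup_def by (meson l_one r_one subsetD)

lemma submonoid'_insert_one:
  assumes "A \<subseteq> carrier G" "mult_closed (\<otimes>) A"
  shows "submonoid' G (insert \<one> A)"
  using assms unfolding submonoid'_def subsemigroup_def mult_closed_def by auto

lemma finite_semigroup_on_subset:
  assumes "finite (carrier G)" "T \<subseteq> carrier G" "mult_closed (\<otimes>) T"
  shows "finite_semigroup_on T (\<otimes>)"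
proof
  show "finite T" using assms(1,2) by (rule finite_subset[rotated])
  show "(x \<otimes> y) \<otimes> z = x \<otimes> (y \<otimes> z)" if "x \<in> T" "y \<in> T" "z \<in> T" for x y z
    using that assms(2) m_assoc by blast
qed (fact assms(3))

lemma nat_pow_mem_if_mult_closed:
  assumes "T \<subseteq> carrier G" "mult_closed (\<otimes>) T" "a \<in> T" "n \<ge> 1"
  shows "a [^] (n::nat) \<in> T"
  using assms(4)
proof (induction n rule: dec_induct)
  case base
  then show ?case using assms(1,3) by auto
next
  case (step n)
  then show ?case using assms(2,3) unfolding mult_closed_def by simp
qed

lemma mult_closed_pos_powers:
  assumes "a \<in> carrier G"
  shows "mult_closed (\<otimes>) {a [^] n | n::nat. n \<ge> 1}"
  unfolding mult_closed_def
proof (intro ballI)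
  fix x y assume "x \<in> {a [^] n | n::nat. n \<ge> 1}" "y \<in> {a [^] n | n::nat. n \<ge> 1}"
  then obtain m n :: nat where "m \<ge> 1" "n \<ge> 1" "x = a [^] m" "y = a [^] n" by blast
  then have "x \<otimes> y = a [^] (m + n)" "m + n \<ge> 1" using nat_pow_mult[OF assms] by auto
  then show "x \<otimes> y \<in> {a [^] n | n::nat. n \<ge> 1}" by blast
qed

lemma idempotent_nat_pow:
  assumes "e \<in> carrier G" "e \<otimes> e = e" "n \<ge> 1"
  shows "e [^] (n::nat) = e"
  using assms(3)
proof (induction n rule: dec_induct)
  case (step n)
  then show ?case using assms(2) by simp
qed (use assms(1) in simp)

lemma group_update_if_left_identity_inverses:
  assumes "T \<subseteq> carrier G" "mult_closed (\<otimes>) T" "e \<in> T"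
    and "\<forall>x\<in>T. e \<otimes> x = x" "\<forall>x\<in>T. \<exists>y\<in>T. y \<otimes> x = e"
  shows "group (G\<lparr>carrier := T, one := e\<rparr>)"
  by (rule groupI) (use assms in \<open>auto simp: mult_closed_def m_assoc subset_iff\<close>)

lemma group_update_if_is_group:
  assumes "finite (carrier G)" "T \<subseteq> carrier G" "mult_closed (\<otimes>) T"
    and "finite_semigroup_on.is_group T (\<otimes>)"
  shows "\<exists>e. group (G\<lparr>carrier := T, one := e\<rparr>)"
proof -
  interpret T: finite_semigroup_on T "(\<otimes>)"
    by (rule finite_semigroup_on_subset[OF assms(1-3)])
  obtain e where "e \<in> T" "\<forall>x\<in>T. e \<otimes> x = x" "\<forall>x\<in>T. \<exists>y\<in>T. y \<otimes> x = e"
    using assms(4) unfolding T.is_group_def by blast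
  then show ?thesis using group_update_if_left_identity_inverses[OF assms(2,3)] by blast
qed

lemma group_update_if_monogenic_with_identity:
  assumes a: "a \<in> carrier G" and T: "T = {a [^] n | n::nat. n \<ge> 1}"
    and e: "e \<in> T" "\<forall>x\<in>T. e \<otimes> x = x \<and> x \<otimes> e = x"
  shows "group (G\<lparr>carrier := T, one := e\<rparr>)"
proof (rule group_update_if_left_identity_inverses)
  show "T \<subseteq> carrier G" using a T by auto
  show "mult_closed (\<otimes>) T" using mult_closed_pos_powers[OF a] T by simp
  show "e \<in> T" "\<forall>x\<in>T. e \<otimes> x = x" using e by auto
  show "\<forall>x\<in>T. \<exists>y\<in>T. y \<otimes> x = e"
  proof
    fix x assume "x \<in> T"
    then obtain n :: nat where n: "x = a [^] n" using T by blast
    obtain k :: nat where k: "k \<ge> 1" "e = a [^] k" using e(1) T by blast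
    define m where "m = k * (n + 1) - n"
    have m: "m \<ge> 1" "m + n = k * (n + 1)"
      using mult_le_mono1[OF k(1), of "n + 1"] unfolding m_def by simp_all
    have "a [^] m \<otimes> x = (a [^] k) [^] (n + 1)"
      using n m(2) nat_pow_mult[OF a] nat_pow_pow[OF a] by (simp add: ac_simps)
    also have "\<dots> = e"
      using idempotent_nat_pow[of e "n + 1"] e a k(2) by simp
    finally show "\<exists>y\<in>T. y \<otimes> x = e" using m(1) T by blast
  qed
qed

lemma group_if_carrier_subset_Units: "carrier G \<subseteq> Units G \<Longrightarrow> group G"
  by (rule group.intro[OF monoid_axioms group_axioms.intro])

lemma Units_if_r_inv:
  assumes fin: "finite (carrier G)" and a: "a \<in> carrier G" and r: "r \<in> carrier G"
    and ar: "a \<otimes> r = \<one>"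
  shows "a \<in> Units G"
proof -
  have "inj_on (\<lambda>z. r \<otimes> z) (carrier G)"
  proof (rule inj_onI)
    fix x y assume "x \<in> carrier G" "y \<in> carrier G" "r \<otimes> x = r \<otimes> y"
    then have "(a \<otimes> r) \<otimes> x = (a \<otimes> r) \<otimes> y" using a r by (simp add: m_assoc)
    then show "x = y" using ar \<open>x \<in> carrier G\<close> \<open>y \<in> carrier G\<close> by simp
  qed
  then have "(\<lambda>z. r \<otimes> z) ` carrier G = carrier G"
    using fin r by (intro endo_inj_surj) auto
  then obtain z where z: "z \<in> carrier G" "r \<otimes> z = \<one>" by (metis one_closed imageE)
  have "a = (a \<otimes> r) \<otimes> z" using a r z by (simp add: m_assoc)
  then have "r \<otimes> a = \<one>" using ar z by simp
  then show ?thesis unfolding Units_def using a r ar by blast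
qed

lemma mult_closed_nonunits:
  assumes "finite (carrier G)"
  shows "mult_closed (\<otimes>) (carrier G - Units G)"
  unfolding mult_closed_def
proof (intro ballI DiffI)
  fix a b assume a: "a \<in> carrier G - Units G" and b: "b \<in> carrier G - Units G"
  then show "a \<otimes> b \<in> carrier G" by blast
  show "a \<otimes> b \<notin> Units G"
  proof
    assume "a \<otimes> b \<in> Units G"
    then obtain c where c: "c \<in> carrier G" "(a \<otimes> b) \<otimes> c = \<one>" unfolding Units_def by blast
    then have "a \<otimes> (b \<otimes> c) = \<one>" using a b by (simp add: m_assoc)
    then have "a \<in> Units G" using Units_if_r_inv[OF assms] a b c(1) by blast
    with a show False by blast
  qed
qed

end

lemma (in group) subgroup_if_mult_closed:
  assumes "finite (carrier G)" "H \<subseteq> carrier G" "H \<noteq> {}" "mult_closed (\<otimes>) H"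
  shows "subgroup H G"
proof (rule subgroupI[OF assms(2,3)])
  fix a assume a: "a \<in> H"
  then have aG: "a \<in> carrier G" using assms(2) by blast
  have n: "ord a \<ge> 1" by (rule ord_ge_1[OF assms(1) aG])
  have "Suc (2 * ord a - 1) = ord a * 2" using n by simp
  then have "a [^] (2 * ord a - 1) \<otimes> a = (a [^] ord a) [^] (2::nat)"
    using aG by (metis nat_pow_Suc nat_pow_pow)
  also have "\<dots> = \<one>" using aG by simp
  finally have "inv a = a [^] (2 * ord a - 1)"
    using aG by (intro inv_equality) simp_all
  moreover have "2 * ord a - 1 \<ge> 1" using n by simp
  ultimately show "inv a \<in> H" using nat_pow_mem_if_mult_closed[OF assms(2,4) a] by simp
next
  fix a b assume "a \<in> H" "b \<in> H"
  then show "a \<otimes> b \<in> H" using assms(4) unfolding mult_closed_def by blast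
qed

context group
begin

lemma subsemigroup_eq_subgroup:
  assumes "finite (carrier G)"
  shows "subsemigroup G = (\<lambda>H. subgroup H G)"
proof (intro ext iffI)
  fix H assume "subsemigroup G H"
  then show "subgroup H G"
    using subgroup_if_mult_closed[OF assms, of H] unfolding subsemigroup_iff_mult_closed by blast
next
  fix H assume H: "subgroup H G"
  have "H \<noteq> {}" using subgroup.one_closed[OF H] by blast
  then show "subsemigroup G H"
    unfolding subsemigroup_def using subgroup.subset[OF H] subgroup.m_closed[OF H] by blast
qed

lemma submonoid'_eq_subgroup:
  assumes "finite (carrier G)"
  shows "submonoid' G = (\<lambda>H. subgroup H G)"
proof
  fix H show "submonoid' G H = subgroup H G"
    unfolding submonoid'_def subsemigroup_eq_subgroup[OF assms] using subgroup.one_closed[of H G] by blast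
qed

lemma monoidal_subsemigroup_eq_subgroup:
  assumes "finite (carrier G)"
  shows "monoidal_subsemigroup G = (\<lambda>H. subgroup H G)"
proof (intro ext iffI)
  fix H assume "monoidal_subsemigroup G H"
  then show "subgroup H G"
    unfolding monoidal_subsemigroup_def subsemigroup_eq_subgroup[OF assms] by blast
next
  fix H assume "subgroup H G"
  then show "monoidal_subsemigroup G H"
    using submonoid'_imp_monoidal_subsemigroup[of H] submonoid'_eq_subgroup[OF assms] by simp
qed

theorem sigmas_eq_sigma_g:
  assumes "finite (carrier G)"
  shows "sigma_m G = sigma_m_star G \<and> sigma_m_star G = sigma_s G \<and> sigma_s G = sigma_g G"
  unfolding sigma_m_def sigma_m_star_def sigma_s_def sigma_g_def
    subsemigroup_eq_subgroup[OF assms] submonoid'_eq_subgroup[OF assms]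
    monoidal_subsemigroup_eq_subgroup[OF assms]
  by simp

end

locale finite_monoid = monoid +
  assumes finite_carrier: "finite (carrier G)"
begin

abbreviation nonidentity :: "'a set" where
  "nonidentity \<equiv> carrier G - {\<one>}"

lemma monoidal_subsemigroup_one: "monoidal_subsemigroup G {\<one>}"
  unfolding monoidal_subsemigroup_def subsemigroup_def by auto

lemma cover_num_eq_2_by_one_and_nonidentity:
  assumes "P {\<one>}" "P nonidentity" "nonidentity \<noteq> {}"
  shows "cover_num (carrier G) P = 2"
  by (rule cover_num_eq_2I[OF assms(1,2)]) (use assms(3) in auto)

end

locale group_with_adjoined_identity = finite_monoid +
  fixes e
  assumes subsemigroup_nonidentity: "subsemigroup G nonidentity"
    and group_nonidentity: "group (G\<lparr>carrier := nonidentity, one := e\<rparr>)"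
begin

abbreviation nonidentity_group where
  "nonidentity_group \<equiv> G\<lparr>carrier := nonidentity, one := e\<rparr>"

lemma nonidentity_ne_empty: "nonidentity \<noteq> {}"
  using subsemigroup_nonidentity unfolding subsemigroup_def by blast

lemma monoidal_subsemigroup_nonidentity: "monoidal_subsemigroup G nonidentity"
proof -
  interpret N: group nonidentity_group by (rule group_nonidentity)
  show ?thesis
    unfolding monoidal_subsemigroup_def using subsemigroup_nonidentity N.one_closed N.l_one N.r_one
    by (intro conjI bexI[of _ e]) auto
qed

lemma sigma_s_eq_2: "sigma_s G = 2"
  unfolding sigma_s_def
  using cover_num_eq_2_by_one_and_nonidentity monoidal_subsemigroup_imp_subsemigroup
    monoidal_subsemigroup_one subsemigroup_nonidentity nonidentity_ne_empty
  by blast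

lemma sigma_m_star_eq_2: "sigma_m_star G = 2"
  unfolding sigma_m_star_def
  using cover_num_eq_2_by_one_and_nonidentity monoidal_subsemigroup_one
    monoidal_subsemigroup_nonidentity nonidentity_ne_empty
  by blast

lemma subgroup_if_proper_submonoid:
  assumes T: "submonoid' G T" "T \<noteq> carrier G" and "T - {\<one>} \<noteq> {}"
  shows "subgroup (T - {\<one>}) nonidentity_group \<and> T - {\<one>} \<noteq> nonidentity"
proof
  interpret N: group nonidentity_group by (rule group_nonidentity)
  have T_closed: "T \<subseteq> carrier G" "\<one> \<in> T" "mult_closed (\<otimes>) T"
    using T(1) unfolding submonoid'_def subsemigroup_iff_mult_closed by blast+
  have "mult_closed (\<otimes>) (T - {\<one>})"
    using T_closed subsemigroup_nonidentity
    unfolding mult_closed_def subsemigroup_def by blast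
  then show "subgroup (T - {\<one>}) nonidentity_group"
    using N.subgroup_if_mult_closed[of "T - {\<one>}"] finite_carrier T_closed(1) \<open>T - {\<one>} \<noteq> {}\<close>
    by auto
  show "T - {\<one>} \<noteq> nonidentity" using T(2) T_closed(1,2) by blast
qed

lemma proper_submonoid_insert_one:
  assumes K: "subgroup K nonidentity_group" "K \<noteq> nonidentity"
  shows "submonoid' G (insert \<one> K) \<and> insert \<one> K \<noteq> carrier G"
proof
  have K_sub: "K \<subseteq> nonidentity" using subgroup.subset[OF K(1)] by simp
  have "mult_closed (\<otimes>) K"
    using subgroup.m_closed[OF K(1)] unfolding mult_closed_def by simp
  then show "submonoid' G (insert \<one> K)" using submonoid'_insert_one K_sub by blast
  show "insert \<one> K \<noteq> carrier G" using K(2) K_sub by blast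
qed

lemma sigma_m_le_sigma_g: "sigma_m G \<le> sigma_g nonidentity_group"
  unfolding sigma_m_def sigma_g_def
proof (rule cover_num_le)
  fix F assume F: "finite F" "\<forall>K\<in>F. subgroup K nonidentity_group \<and> K \<noteq> carrier nonidentity_group"
    "\<Union>F = carrier nonidentity_group"
  have "F \<noteq> {}" using F(3) nonidentity_ne_empty by auto
  then have "\<Union>(insert \<one> ` F) = carrier G" using F(3) by auto
  moreover have "\<forall>A\<in>insert \<one> ` F. submonoid' G A \<and> A \<noteq> carrier G"
    using F(2) proper_submonoid_insert_one by auto
  ultimately show "\<exists>F'. finite F' \<and> card F' \<le> card F \<and>
      (\<forall>A\<in>F'. submonoid' G A \<and> A \<noteq> carrier G) \<and> \<Union>F' = carrier G"
    using F(1) card_image_le[OF F(1)] by blast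
qed

lemma sigma_g_le_sigma_m: "sigma_g nonidentity_group \<le> sigma_m G"
  unfolding sigma_m_def sigma_g_def
proof (rule cover_num_le)
  fix F assume F: "finite F" "\<forall>T\<in>F. submonoid' G T \<and> T \<noteq> carrier G" "\<Union>F = carrier G"
  define F' where "F' = (\<lambda>T. T - {\<one>}) ` F - {{}}"
  have "card F' \<le> card ((\<lambda>T. T - {\<one>}) ` F)"
    unfolding F'_def using F(1) by (intro card_mono) auto
  also have "\<dots> \<le> card F" by (rule card_image_le[OF F(1)])
  finally have "card F' \<le> card F" .
  moreover have "\<forall>K\<in>F'. subgroup K nonidentity_group \<and> K \<noteq> carrier nonidentity_group"
    unfolding F'_def using F(2) subgroup_if_proper_submonoid by auto
  moreover have "\<Union>F' = carrier nonidentity_group"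
    unfolding F'_def using F(3) by auto
  moreover have "finite F'" unfolding F'_def using F(1) by simp
  ultimately show "\<exists>F'. finite F' \<and> card F' \<le> card F \<and>
      (\<forall>K\<in>F'. subgroup K nonidentity_group \<and> K \<noteq> carrier nonidentity_group) \<and>
      \<Union>F' = carrier nonidentity_group"
    by blast
qed

theorem sigmas:
  "sigma_m_star G = 2 \<and> sigma_s G = 2 \<and> sigma_m G = sigma_g nonidentity_group"
  using sigma_m_star_eq_2 sigma_s_eq_2 sigma_m_le_sigma_g sigma_g_le_sigma_m by auto

end

context finite_monoid
begin

lemma generator_notin_proper_monoidal_subsemigroup:
  assumes gen: "nonidentity = {a [^] n | n::nat. n \<ge> 1}" and a: "a \<in> nonidentity"
    and not_group: "\<nexists>e. group (G\<lparr>carrier := nonidentity, one := e\<rparr>)"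
    and T: "monoidal_subsemigroup G T" "T \<noteq> carrier G"
  shows "a \<notin> T"
proof
  assume "a \<in> T"
  obtain e where T_closed: "T \<subseteq> carrier G" "mult_closed (\<otimes>) T"
    and e: "e \<in> T" "\<forall>x\<in>T. e \<otimes> x = x \<and> x \<otimes> e = x"
    using T(1) unfolding monoidal_subsemigroup_def subsemigroup_iff_mult_closed by blast
  have "nonidentity \<subseteq> T" using gen nat_pow_mem_if_mult_closed[OF T_closed \<open>a \<in> T\<close>] by auto
  moreover have "\<one> \<notin> T" using calculation T(2) T_closed(1) by blast
  ultimately have "T = nonidentity" using T_closed(1) by blast
  then have "group (G\<lparr>carrier := nonidentity, one := e\<rparr>)"
    using group_update_if_monogenic_with_identity[OF _ gen] a e by auto
  with not_group show False by blast
qed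

theorem sigmas_if_monogenic_nonidentity:
  assumes "monogenic G nonidentity" and not_group: "\<nexists>e. group (G\<lparr>carrier := nonidentity, one := e\<rparr>)"
  shows "sigma_s G = 2 \<and> sigma_m_star G = \<infinity> \<and> sigma_m G = \<infinity>"
proof -
  obtain a where a: "a \<in> nonidentity" and gen: "nonidentity = {a [^] n | n::nat. n \<ge> 1}"
    using assms(1) unfolding monogenic_def by blast
  have "subsemigroup G nonidentity"
    using mult_closed_pos_powers[of a] a gen unfolding subsemigroup_iff_mult_closed by auto
  then have "sigma_s G = 2"
    unfolding sigma_s_def using a
    by (intro cover_num_eq_2_by_one_and_nonidentity
        monoidal_subsemigroup_imp_subsemigroup[OF monoidal_subsemigroup_one]) auto
  moreover have "sigma_m_star G = \<infinity>"
    unfolding sigma_m_star_def using a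
    by (intro cover_num_eq_infinityI[of a]) (auto dest: generator_notin_proper_monoidal_subsemigroup[OF gen a not_group])
  moreover have "sigma_m G = \<infinity>"
    unfolding sigma_m_def using a
    by (intro cover_num_eq_infinityI[of a])
      (auto dest: submonoid'_imp_monoidal_subsemigroup generator_notin_proper_monoidal_subsemigroup[OF gen a not_group])
  ultimately show ?thesis by blast
qed

end

definition two_proper_submonoid_cover :: "('a, 'b) monoid_scheme \<Rightarrow> bool" where
  "two_proper_submonoid_cover M \<longleftrightarrow>
     (\<exists>A B. submonoid' M A \<and> submonoid' M B \<and> A \<noteq> carrier M \<and> B \<noteq> carrier M \<and> A \<union> B = carrier M)"

lemma (in monoid) sigmas_eq_2_if_two_proper_submonoid_cover:
  assumes "two_proper_submonoid_cover G"
  shows "sigma_m G = 2 \<and> sigma_m_star G = 2 \<and> sigma_s G = 2"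
proof -
  obtain A B where AB: "submonoid' G A" "submonoid' G B" "A \<noteq> carrier G" "B \<noteq> carrier G"
    "A \<union> B = carrier G"
    using assms unfolding two_proper_submonoid_cover_def by blast
  have monoidal: "monoidal_subsemigroup G A" "monoidal_subsemigroup G B"
    using AB(1,2) by (simp_all add: submonoid'_imp_monoidal_subsemigroup)
  show ?thesis
    unfolding sigma_m_def sigma_m_star_def sigma_s_def
    using cover_num_eq_2I[OF AB] cover_num_eq_2I[OF monoidal AB(3-5)]
      cover_num_eq_2I[OF monoidal[THEN monoidal_subsemigroup_imp_subsemigroup] AB(3-5)]
    by blast
qed

context finite_monoid
begin

lemma two_proper_submonoid_cover_if_nontrivial_unit:
  assumes "\<not> group G" "x \<in> Units G" "x \<noteq> \<one>"
  shows "two_proper_submonoid_cover G"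
proof -
  have Units_sub: "Units G \<subseteq> carrier G" using Units_closed by blast
  then have "submonoid' G (Units G)"
    unfolding submonoid'_def subsemigroup_def using Units_one_closed Units_m_closed by blast
  moreover have "submonoid' G (insert \<one> (carrier G - Units G))"
    using submonoid'_insert_one[OF Diff_subset mult_closed_nonunits[OF finite_carrier]] .
  moreover have "Units G \<noteq> carrier G"
    using assms(1) group_if_carrier_subset_Units by blast
  moreover have "insert \<one> (carrier G - Units G) \<noteq> carrier G" using assms(2,3) by blast
  moreover have "Units G \<union> insert \<one> (carrier G - Units G) = carrier G"
    using Units_sub Units_one_closed by blast
  ultimately show ?thesis unfolding two_proper_submonoid_cover_def by blast
qed

lemma two_proper_submonoid_cover_if_not_subsemigroup:
  assumes "\<not> group G" "\<not> subsemigroup G nonidentity"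
  shows "two_proper_submonoid_cover G"
proof -
  have "nonidentity \<noteq> {}"
  proof
    assume "nonidentity = {}"
    then have "carrier G \<subseteq> Units G" by auto
    with assms(1) show False using group_if_carrier_subset_Units by blast
  qed
  then obtain x y where xy: "x \<in> nonidentity" "y \<in> nonidentity" "x \<otimes> y = \<one>"
    using assms(2) unfolding subsemigroup_iff_mult_closed mult_closed_def by blast
  then have "x \<in> Units G" using Units_if_r_inv[OF finite_carrier] by blast
  then show ?thesis using two_proper_submonoid_cover_if_nontrivial_unit[OF assms(1)] xy(1) by blast
qed

lemma two_proper_submonoid_cover_if_subsemigroup:
  assumes "subsemigroup G nonidentity" "\<not> monogenic G nonidentity"
    and "\<nexists>e. group (G\<lparr>carrier := nonidentity, one := e\<rparr>)"
  shows "two_proper_submonoid_cover G"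
proof -
  have closed: "nonidentity \<subseteq> carrier G" "nonidentity \<noteq> {}" "mult_closed (\<otimes>) nonidentity"
    using assms(1) unfolding subsemigroup_iff_mult_closed by blast+
  interpret N: finite_semigroup_on nonidentity "(\<otimes>)"
    by (rule finite_semigroup_on_subset[OF finite_carrier closed(1,3)])
  have "\<not> N.is_group"
    using group_update_if_is_group[OF finite_carrier closed(1,3)] assms(3) by blast
  moreover have "\<exists>T. T \<subset> nonidentity \<and> a \<in> T \<and> mult_closed (\<otimes>) T" if a: "a \<in> nonidentity" for a
  proof -
    let ?T = "{a [^] n | n::nat. n \<ge> 1}"
    have "?T \<subseteq> nonidentity"
      using nat_pow_mem_if_mult_closed[OF closed(1,3) a] by auto
    moreover have "?T \<noteq> nonidentity"
    proof
      assume "?T = nonidentity"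
      have "monogenic G nonidentity" unfolding monogenic_def
      proof (rule bexI[OF _ a])
        show "nonidentity = ?T" using \<open>?T = nonidentity\<close> by (rule sym)
      qed
      with assms(2) show False by contradiction
    qed
    moreover have "a \<in> ?T" using a by (intro CollectI exI[of _ 1]) simp
    moreover have "mult_closed (\<otimes>) ?T" using a by (intro mult_closed_pos_powers) simp
    ultimately have "?T \<subset> nonidentity \<and> a \<in> ?T \<and> mult_closed (\<otimes>) ?T" by blast
    then show ?thesis by (rule exI)
  qed
  ultimately have "two_proper_closed_cover (\<otimes>) nonidentity"
    using N.two_proper_closed_cover_if_not_group closed(2) by blast
  then obtain A B where AB: "A \<subset> nonidentity" "B \<subset> nonidentity" "A \<union> B = nonidentity"
    "mult_closed (\<otimes>) A" "mult_closed (\<otimes>) B"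
    unfolding two_proper_closed_cover_def by blast
  have "submonoid' G (insert \<one> A)" "submonoid' G (insert \<one> B)"
    using AB submonoid'_insert_one by auto
  moreover have "insert \<one> A \<noteq> carrier G" "insert \<one> B \<noteq> carrier G"
    using AB(1,2) by auto
  moreover have "insert \<one> A \<union> insert \<one> B = carrier G" using AB(3) by auto
  ultimately show ?thesis unfolding two_proper_submonoid_cover_def by blast
qed

end

theorem mainTheorem19:
  fixes M :: "('a, 'b) monoid_scheme"
  assumes "monoid M" and "finite (carrier M)"
  defines "S \<equiv> carrier M - {\<one>\<^bsub>M\<^esub>}"
  shows
    "(group M \<longrightarrow>
        sigma_m M = sigma_m_star M \<and> sigma_m_star M = sigma_s M \<and> sigma_s M = sigma_g M)
   \<and> (\<forall>e. subsemigroup M S \<and> group (M\<lparr>carrier := S, one := e\<rparr>) \<longrightarrow>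
        sigma_m_star M = 2 \<and> sigma_s M = 2 \<and>
        sigma_m M = sigma_g (M\<lparr>carrier := S, one := e\<rparr>))
   \<and> (subsemigroup M S \<and> monogenic M S \<and> \<not> (\<exists>e. group (M\<lparr>carrier := S, one := e\<rparr>)) \<longrightarrow>
        sigma_s M = 2 \<and> sigma_m_star M = \<infinity> \<and> sigma_m M = \<infinity>)
   \<and> (\<not> group M
      \<and> \<not> (subsemigroup M S \<and> (\<exists>e. group (M\<lparr>carrier := S, one := e\<rparr>)))
      \<and> \<not> (subsemigroup M S \<and> monogenic M S \<and> \<not> (\<exists>e. group (M\<lparr>carrier := S, one := e\<rparr>))) \<longrightarrow>
        sigma_m M = 2 \<and> sigma_m_star M = 2 \<and> sigma_s M = 2)"
proof -
  have finite_monoid: "finite_monoid M"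
    using assms(1,2) by (intro finite_monoid.intro finite_monoid_axioms.intro)
  interpret finite_monoid M by (fact finite_monoid)
  show ?thesis (is "?group \<and> ?adjoined \<and> ?monogenic \<and> ?otherwise")
  proof (intro conjI)
    show ?group using group.sigmas_eq_sigma_g assms(2) by blast
    show ?adjoined
      unfolding S_def
      using group_with_adjoined_identity.sigmas[OF group_with_adjoined_identity.intro[OF finite_monoid
          group_with_adjoined_identity_axioms.intro]]
      by blast
    show ?monogenic
      unfolding S_def using sigmas_if_monogenic_nonidentity by blast
    show ?otherwise
      unfolding S_def
      using two_proper_submonoid_cover_if_not_subsemigroup two_proper_submonoid_cover_if_subsemigroup
        sigmas_eq_2_if_two_proper_submonoid_cover
      by blast
  qed
qed

end
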